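(* If an unbounded graph matroid family $\mathcal{M}$ has the Whitney property, then it has the Lovász-Yemini property.
   Context: All graphs are finite and simple and have no isolated vertices. A graph matroid family $\mathcal{M}$ assigns to every graph $G$ a matroid $\mathcal{M}(G)$ on $E(G)$ such that (i) every graph isomorphism $V(G)\to V(H)$ induces an isomorphism $\mathcal{M}(G)\to\mathcal{M}(H)$, and (ii) for every subgraph $H$ of $G$, $\mathcal{M}(H)$ is the restriction of $\mathcal{M}(G)$ to $E(H)$. $r(G)$ is the rank of $\mathcal{M}(G)$; $\mathcal{M}$ is unbounded if $r(K_n)$ is unbounded; $G$ is $\mathcal{M}$-rigid if $r(G)=r(K_{V(G)})$. $G$ is $\mathcal{M}$-reconstructible if every matroid isomorphism $\psi:E(G)\to E(H)$ between $\mathcal{M}(G)$ and $\mathcal{M}(H)$, for any graph $H$, is induced by a graph isomorphism $\varphi$ (i.e. $\psi(uv)=\varphi(u)\varphi(v)$). $\mathcal{M}$ has the Whitney property if for some nonnegative integer $c$ every $c$-connected graph is $\mathcal{M}$-reconstructible, and the Lovász-Yemini property if for some nonnegative integer $c$ every $c$-connected graph is $\mathcal{M}$-rigid. *)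

theory Defs
  imports Main
begin

(* Vertices are natural numbers; the vertex set is the union of the edges,
   so there are no isolated vertices by construction. *)
type_synonym graph = "nat set set"

definition is_graph :: "graph \<Rightarrow> bool" where
  "is_graph G \<longleftrightarrow> finite G \<and> (\<forall>e\<in>G. card e = 2)"

definition verts :: "graph \<Rightarrow> nat set" where
  "verts G = \<Union>G"

definition complete_graph :: "nat set \<Rightarrow> graph" where
  "complete_graph V = {{u, v} | u v. u \<in> V \<and> v \<in> V \<and> u \<noteq> v}"

definition graph_iso :: "(nat \<Rightarrow> nat) \<Rightarrow> graph \<Rightarrow> graph \<Rightarrow> bool" where
  "graph_iso \<phi> G H \<longleftrightarrow> bij_betw \<phi> (verts G) (verts H) \<and>
     (\<forall>u\<in>verts G. \<forall>v\<in>verts G. {u, v} \<in> G \<longleftrightarrow> {\<phi> u, \<phi> v} \<in> H)"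

definition edge_map :: "(nat \<Rightarrow> nat) \<Rightarrow> nat set \<Rightarrow> nat set" where
  "edge_map \<phi> e = \<phi> ` e"

definition matroid :: "'e set \<Rightarrow> ('e set \<Rightarrow> bool) \<Rightarrow> bool" where
  "matroid E indep \<longleftrightarrow> finite E \<and> indep {} \<and>
     (\<forall>X. indep X \<longrightarrow> X \<subseteq> E) \<and>
     (\<forall>X Y. indep Y \<and> X \<subseteq> Y \<longrightarrow> indep X) \<and>
     (\<forall>X Y. indep X \<and> indep Y \<and> card X < card Y \<longrightarrow>
        (\<exists>y\<in>Y - X. indep (insert y X)))"

definition matroid_iso :: "('e \<Rightarrow> 'f) \<Rightarrow> 'e set \<Rightarrow> ('e set \<Rightarrow> bool) \<Rightarrow> 'f set \<Rightarrow> ('f set \<Rightarrow> bool) \<Rightarrow> bool" where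
  "matroid_iso \<psi> E1 I1 E2 I2 \<longleftrightarrow> bij_betw \<psi> E1 E2 \<and>
     (\<forall>X\<subseteq>E1. I1 X \<longleftrightarrow> I2 (\<psi> ` X))"

(* A graph matroid family: M G X means X is independent in M(G). *)
definition graph_matroid_family :: "(graph \<Rightarrow> nat set set \<Rightarrow> bool) \<Rightarrow> bool" where
  "graph_matroid_family M \<longleftrightarrow>
     (\<forall>G. is_graph G \<longrightarrow> matroid G (M G)) \<and>
     (\<forall>G H \<phi>. is_graph G \<and> is_graph H \<and> graph_iso \<phi> G H \<longrightarrow>
        matroid_iso (edge_map \<phi>) G (M G) H (M H)) \<and>
     (\<forall>G H. is_graph G \<and> H \<subseteq> G \<longrightarrow> (\<forall>X\<subseteq>H. M H X \<longleftrightarrow> M G X))"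

definition mrank :: "(graph \<Rightarrow> nat set set \<Rightarrow> bool) \<Rightarrow> graph \<Rightarrow> nat" where
  "mrank M G = Max (card ` {X. M G X})"

definition unbounded :: "(graph \<Rightarrow> nat set set \<Rightarrow> bool) \<Rightarrow> bool" where
  "unbounded M \<longleftrightarrow> (\<forall>B. \<exists>n. mrank M (complete_graph {0..<n}) > B)"

definition M_rigid :: "(graph \<Rightarrow> nat set set \<Rightarrow> bool) \<Rightarrow> graph \<Rightarrow> bool" where
  "M_rigid M G \<longleftrightarrow> mrank M G = mrank M (complete_graph (verts G))"

definition M_reconstructible :: "(graph \<Rightarrow> nat set set \<Rightarrow> bool) \<Rightarrow> graph \<Rightarrow> bool" where
  "M_reconstructible M G \<longleftrightarrow>
     (\<forall>H \<psi>. is_graph H \<and> matroid_iso \<psi> G (M G) H (M H) \<longrightarrow>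
        (\<exists>\<phi>. graph_iso \<phi> G H \<and> (\<forall>e\<in>G. \<psi> e = edge_map \<phi> e)))"

definition connected_on :: "graph \<Rightarrow> nat set \<Rightarrow> bool" where
  "connected_on G W \<longleftrightarrow>
     (\<forall>u\<in>W. \<forall>v\<in>W. (u, v) \<in> {(a, b). {a, b} \<in> G \<and> a \<in> W \<and> b \<in> W}\<^sup>*)"

definition k_connected :: "nat \<Rightarrow> graph \<Rightarrow> bool" where
  "k_connected k G \<longleftrightarrow> card (verts G) > k \<and>
     (\<forall>X. X \<subseteq> verts G \<and> card X < k \<longrightarrow> connected_on G (verts G - X))"

definition whitney_property :: "(graph \<Rightarrow> nat set set \<Rightarrow> bool) \<Rightarrow> bool" where
  "whitney_property M \<longleftrightarrow>
     (\<exists>c. \<forall>G. is_graph G \<and> k_connected c G \<longrightarrow> M_reconstructible M G)"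

definition lovasz_yemini_property :: "(graph \<Rightarrow> nat set set \<Rightarrow> bool) \<Rightarrow> bool" where
  "lovasz_yemini_property M \<longleftrightarrow>
     (\<exists>c. \<forall>G. is_graph G \<and> k_connected c G \<longrightarrow> M_rigid M G)"

end

(* Let every c-connected graph be M-reconstructible, let G be (max c 3)-connected and K the
   complete graph on its vertices. If G is not rigid, some edge x of K - G raises the rank of G.
   Such an edge is unique: if y is another one, x and y are coloops of G + x and G + y, so
   exchanging them is an isomorphism M(G + x) -> M(G + y) fixing G pointwise. A vertex map
   inducing it fixes every edge of G, hence every vertex (G has minimum degree at least 2), hence x.
   But x is not a coloop of M(K) either: an automorphism of K would carry it to a coloop x'
   adjacent to x, and exchanging two adjacent coloops is a matroid automorphism of M(K) not induced
   by any vertex map. So K - x has the rank of K, and contains a second rank-raising edge. *)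
theory Submission
  imports Defs "HOL-Combinatorics.Transposition"
begin

lemma is_graph_edge:
  assumes "is_graph G" "e \<in> G"
  obtains u v where "e = {u, v}" "u \<noteq> v"
proof -
  have "card e = 2"
    using assms unfolding is_graph_def by blast
  then show thesis
    using that unfolding card_2_iff by blast
qed

lemma obtain_not_in_smaller_set:
  assumes "finite A" "card A < card B"
  obtains b where "b \<in> B" "b \<notin> A"
proof -
  have "\<not> B \<subseteq> A"
    using card_mono[OF assms(1)] assms(2) by (meson leD)
  then show thesis
    using that by blast
qed

lemma is_graph_subset: "is_graph G \<Longrightarrow> H \<subseteq> G \<Longrightarrow> is_graph H"
  unfolding is_graph_def by (meson finite_subset subsetD)

lemma finite_verts: "is_graph G \<Longrightarrow> finite (verts G)"
  unfolding verts_def is_graph_def by (metis card.infinite finite_Union zero_neq_numeral)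

lemma verts_mono: "G \<subseteq> H \<Longrightarrow> verts G \<subseteq> verts H"
  unfolding verts_def by blast

lemma doubleton_in_complete_graph_iff:
  "u \<in> V \<Longrightarrow> v \<in> V \<Longrightarrow> {u, v} \<in> complete_graph V \<longleftrightarrow> u \<noteq> v"
  unfolding complete_graph_def by (auto simp: doubleton_eq_iff)

lemma complete_graph_edge_subset: "e \<in> complete_graph V \<Longrightarrow> e \<subseteq> V"
  unfolding complete_graph_def by auto

lemma is_graph_complete_graph: "finite V \<Longrightarrow> is_graph (complete_graph V)"
proof -
  assume "finite V"
  moreover have "complete_graph V \<subseteq> Pow V"
    using complete_graph_edge_subset by blast
  ultimately show ?thesis
    unfolding is_graph_def complete_graph_def by (auto intro: finite_subset)
qed

lemma verts_complete_graph:
  assumes "2 \<le> card V"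
  shows "verts (complete_graph V) = V"
proof
  show "verts (complete_graph V) \<subseteq> V"
    unfolding verts_def using complete_graph_edge_subset by blast
  show "V \<subseteq> verts (complete_graph V)"
  proof
    fix v assume v: "v \<in> V"
    have "card {v} < card V"
      using assms by simp
    then obtain u where "u \<in> V" "u \<notin> {v}"
      using obtain_not_in_smaller_set[of "{v}" V] by auto
    then have "{u, v} \<in> complete_graph V"
      using v doubleton_in_complete_graph_iff by blast
    then show "v \<in> verts (complete_graph V)"
      unfolding verts_def by blast
  qed
qed

lemma subset_complete_graph_verts: "is_graph G \<Longrightarrow> G \<subseteq> complete_graph (verts G)"
proof
  fix e assume "is_graph G" "e \<in> G"
  then obtain u v where "e = {u, v}" "u \<noteq> v"
    by (elim is_graph_edge)
  with \<open>e \<in> G\<close> show "e \<in> complete_graph (verts G)"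
    unfolding complete_graph_def verts_def by blast
qed

lemma graph_iso_complete_graph:
  assumes "2 \<le> card V" "bij_betw \<sigma> V V"
  shows "graph_iso \<sigma> (complete_graph V) (complete_graph V)"
  unfolding graph_iso_def verts_complete_graph[OF assms(1)]
proof (intro conjI assms(2) ballI)
  fix u v assume "u \<in> V" "v \<in> V"
  moreover have "\<sigma> u = \<sigma> v \<longleftrightarrow> u = v"
    using assms(2) \<open>u \<in> V\<close> \<open>v \<in> V\<close> by (auto simp: bij_betw_def dest: inj_onD)
  ultimately show "{u, v} \<in> complete_graph V \<longleftrightarrow> {\<sigma> u, \<sigma> v} \<in> complete_graph V"
    using assms(2) by (simp add: doubleton_in_complete_graph_iff bij_betwE)
qed

lemma connected_on_mono: "connected_on G W \<Longrightarrow> G \<subseteq> H \<Longrightarrow> connected_on H W"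
proof -
  assume "connected_on G W" "G \<subseteq> H"
  then have "{(a, b). {a, b} \<in> G \<and> a \<in> W \<and> b \<in> W}
      \<subseteq> {(a, b). {a, b} \<in> H \<and> a \<in> W \<and> b \<in> W}"
    by auto
  with \<open>connected_on G W\<close> show ?thesis
    unfolding connected_on_def using rtrancl_mono by blast
qed

lemma k_connected_mono:
  assumes "k_connected k G" "G \<subseteq> H" "verts H = verts G" "j \<le> k"
  shows "k_connected j H"
  unfolding k_connected_def
proof (intro conjI allI impI)
  show "j < card (verts H)"
    using assms unfolding k_connected_def by simp
  fix X assume "X \<subseteq> verts H \<and> card X < j"
  with assms have "connected_on G (verts G - X)"
    unfolding k_connected_def by simp
  with assms(2,3) show "connected_on H (verts H - X)"
    by (simp add: connected_on_mono)
qed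

lemma k_connected_two_neighbours:
  assumes G: "is_graph G" "k_connected 2 G" and v: "v \<in> verts G"
  obtains p q where "p \<noteq> q" "{v, p} \<in> G" "{v, q} \<in> G"
proof -
  obtain e where "e \<in> G" "v \<in> e"
    using v unfolding verts_def by blast
  then obtain u w where "e = {u, w}" "u \<noteq> w"
    using G(1) by (elim is_graph_edge)
  define p where "p = (if v = u then w else u)"
  have p: "{v, p} \<in> G" "p \<noteq> v"
    using \<open>e \<in> G\<close> \<open>v \<in> e\<close> \<open>e = {u, w}\<close> \<open>u \<noteq> w\<close> unfolding p_def
    by (auto simp: insert_commute)
  have "p \<in> verts G"
    using p unfolding verts_def by blast
  have "card (verts G) > 2"
    using G(2) unfolding k_connected_def by simp
  moreover have "card {v, p} \<le> 2"
    by (simp add: card_insert_le_m1)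
  ultimately obtain w where w: "w \<in> verts G" "w \<notin> {v, p}"
    using obtain_not_in_smaller_set[of "{v, p}" "verts G"] by auto
  have "connected_on G (verts G - {p})"
    using G(2) \<open>p \<in> verts G\<close> unfolding k_connected_def by auto
  then have "(v, w) \<in> {(a, b). {a, b} \<in> G \<and> a \<in> verts G - {p} \<and> b \<in> verts G - {p}}\<^sup>*"
    unfolding connected_on_def using v w p by blast
  then obtain q where "{v, q} \<in> G" "q \<noteq> p"
    using w(2) by (cases rule: converse_rtranclE) auto
  then show thesis
    using that p by blast
qed

lemma fixes_verts_if_fixes_edges:
  assumes "is_graph G" "k_connected 2 G" "\<And>e. e \<in> G \<Longrightarrow> \<phi> ` e = e" "v \<in> verts G"
  shows "\<phi> v = v"
proof -
  obtain p q where "p \<noteq> q" "{v, p} \<in> G" "{v, q} \<in> G"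
    using k_connected_two_neighbours assms by blast
  then have "\<phi> v \<in> {v, p}" "\<phi> v \<in> {v, q}"
    using assms(3) by (metis imageI insertI1)+
  with \<open>p \<noteq> q\<close> show ?thesis
    by blast
qed

definition rank_of :: "('e set \<Rightarrow> bool) \<Rightarrow> 'e set \<Rightarrow> nat" where
  "rank_of I S = Max (card ` {X. X \<subseteq> S \<and> I X})"

context
  fixes E :: "'e set" and I :: "'e set \<Rightarrow> bool"
  assumes matroid: "matroid E I"
begin

lemma matroidD:
  "finite E" "I {}" "\<forall>X. I X \<longrightarrow> X \<subseteq> E"
  "\<forall>X Y. I Y \<and> X \<subseteq> Y \<longrightarrow> I X"
  "\<forall>X Y. I X \<and> I Y \<and> card X < card Y \<longrightarrow> (\<exists>y\<in>Y - X. I (insert y X))"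
  using matroid unfolding matroid_def by simp_all

lemma indep_subset_ground: "I X \<Longrightarrow> X \<subseteq> E"
  using matroidD(3) by blast

lemma indep_subset: "I Y \<Longrightarrow> X \<subseteq> Y \<Longrightarrow> I X"
  using matroidD(4) by blast

lemma indep_augment:
  assumes "I X" "I Y" "card X < card Y"
  obtains y where "y \<in> Y - X" "I (insert y X)"
  using matroidD(5) assms by blast

lemma finite_indep: "I X \<Longrightarrow> finite X"
  by (rule finite_subset[OF indep_subset_ground matroidD(1)])

lemma finite_indep_subsets: "finite {X. X \<subseteq> S \<and> I X}"
proof (rule finite_subset)
  show "{X. X \<subseteq> S \<and> I X} \<subseteq> Pow E"
    using indep_subset_ground by blast
  show "finite (Pow E)"
    using matroidD(1) by simp
qed

lemma card_le_rank_of: "X \<subseteq> S \<Longrightarrow> I X \<Longrightarrow> card X \<le> rank_of I S"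
  unfolding rank_of_def using finite_indep_subsets by (intro Max_ge) auto

lemma rank_of_attained: "\<exists>X. X \<subseteq> S \<and> I X \<and> card X = rank_of I S"
proof -
  have "rank_of I S \<in> card ` {X. X \<subseteq> S \<and> I X}"
    unfolding rank_of_def using finite_indep_subsets matroidD(2) by (intro Max_in) auto
  then show ?thesis
    by auto
qed

lemma indep_extends_to_rank_of:
  assumes "Y \<subseteq> S" "I Y"
  shows "\<exists>Z. Y \<subseteq> Z \<and> Z \<subseteq> S \<and> I Z \<and> card Z = rank_of I S"
  using assms
proof (induction "rank_of I S - card Y" arbitrary: Y)
  case 0
  then have "card Y = rank_of I S"
    using card_le_rank_of[of Y S] by simp
  with 0 show ?case
    by blast
next
  case (Suc n)
  obtain W where W: "W \<subseteq> S" "I W" "card W = rank_of I S"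
    using rank_of_attained by blast
  moreover have "card Y < card W"
    using Suc.hyps(2) W(3) by simp
  ultimately obtain y where y: "y \<in> W - Y" "I (insert y Y)"
    using indep_augment[of Y W] Suc.prems(2) by blast
  have "card (insert y Y) = Suc (card Y)"
    using y finite_indep[OF Suc.prems(2)] by simp
  then have "rank_of I S - card (insert y Y) = n"
    using Suc.hyps(2) by simp
  then obtain Z where "insert y Y \<subseteq> Z" "Z \<subseteq> S" "I Z" "card Z = rank_of I S"
    using Suc.hyps(1) y W(1) Suc.prems(1) by blast
  then show ?case
    by blast
qed

lemma rank_of_mono:
  assumes "S \<subseteq> T"
  shows "rank_of I S \<le> rank_of I T"
proof -
  obtain X where "X \<subseteq> S" "I X" "card X = rank_of I S"
    using rank_of_attained by blast
  with assms show ?thesis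
    using card_le_rank_of[of X T] by simp
qed

lemma indep_insert_coloop_iff:
  assumes "e \<notin> S" "rank_of I S < rank_of I (insert e S)" "Y \<subseteq> S"
  shows "I (insert e Y) \<longleftrightarrow> I Y"
proof
  show "I (insert e Y) \<Longrightarrow> I Y"
    by (rule indep_subset[of "insert e Y"]) auto
next
  assume "I Y"
  then obtain Z where Z: "Y \<subseteq> Z" "Z \<subseteq> insert e S" "I Z" "card Z = rank_of I (insert e S)"
    using indep_extends_to_rank_of[of Y "insert e S"] assms(3) by blast
  have "e \<in> Z"
  proof (rule ccontr)
    assume "e \<notin> Z"
    then have "card Z \<le> rank_of I S"
      using Z(2,3) by (intro card_le_rank_of) auto
    with Z(4) assms(2) show False
      by simp
  qed
  with Z(1) have "insert e Y \<subseteq> Z"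
    by blast
  with Z(3) show "I (insert e Y)"
    by (rule indep_subset)
qed

lemma exists_rank_increasing_element:
  assumes "S \<subseteq> T" "rank_of I S < rank_of I T"
  shows "\<exists>y\<in>T - S. rank_of I S < rank_of I (insert y S)"
proof -
  obtain B where B: "B \<subseteq> S" "I B" "card B = rank_of I S"
    using rank_of_attained by blast
  obtain W where W: "W \<subseteq> T" "I W" "card W = rank_of I T"
    using rank_of_attained by blast
  have "card B < card W"
    using B(3) W(3) assms(2) by simp
  then obtain y where y: "y \<in> W - B" "I (insert y B)"
    using indep_augment[OF B(2) W(2)] by blast
  have card_insert: "card (insert y B) = Suc (rank_of I S)"
    using B y finite_indep by simp
  have "y \<notin> S"
  proof
    assume "y \<in> S"
    then have "card (insert y B) \<le> rank_of I S"
      using B y by (intro card_le_rank_of) auto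
    with card_insert show False
      by simp
  qed
  with y W(1) have "y \<in> T - S"
    by blast
  moreover have "card (insert y B) \<le> rank_of I (insert y S)"
    using B y by (intro card_le_rank_of) auto
  then have "rank_of I S < rank_of I (insert y S)"
    using card_insert by simp
  ultimately show ?thesis
    by (rule bexI[rotated])
qed

lemma indep_transpose_coloops:
  assumes "x \<in> S" "y \<in> S"
    and "rank_of I (S - {x}) < rank_of I S" "rank_of I (S - {y}) < rank_of I S"
    and "X \<subseteq> S"
  shows "I (transpose x y ` X) \<longleftrightarrow> I X"
proof (cases "x \<in> X \<longleftrightarrow> y \<in> X")
  case True
  then show ?thesis
    by simp
next
  case False
  define Y where "Y = X - {x, y}"
  have coloop: "I (insert e Y) \<longleftrightarrow> I Y" if "e \<in> {x, y}" for e
  proof (rule indep_insert_coloop_iff[where S = "S - {e}"])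
    show "e \<notin> S - {e}" "Y \<subseteq> S - {e}"
      using that assms(5) unfolding Y_def by auto
    have "insert e (S - {e}) = S"
      using that assms(1,2) by auto
    then show "rank_of I (S - {e}) < rank_of I (insert e (S - {e}))"
      using that assms(3,4) by auto
  qed
  define a where "a = (if x \<in> X then x else y)"
  have a: "a \<in> {x, y}" "X = insert a Y"
    using False unfolding a_def Y_def by auto
  have "x \<notin> Y" "y \<notin> Y"
    unfolding Y_def by auto
  then have "transpose x y ` X = insert (transpose x y a) Y"
    using a(2) by simp
  moreover have "transpose x y a \<in> {x, y}"
    using a(1) by auto
  ultimately show ?thesis
    using a coloop by simp
qed

lemma indep_transpose_added_coloops:
  assumes "x \<notin> S" "y \<notin> S"
    and "rank_of I S < rank_of I (insert x S)" "rank_of I S < rank_of I (insert y S)"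
    and "X \<subseteq> insert x S"
  shows "I (transpose x y ` X) \<longleftrightarrow> I X"
proof (cases "x \<in> X")
  case True
  define Y where "Y = X - {x}"
  have Y: "X = insert x Y" "Y \<subseteq> S"
    using True assms(5) unfolding Y_def by auto
  then have "x \<notin> Y" "y \<notin> Y"
    using assms(1,2) by auto
  then have "transpose x y ` X = insert y Y"
    using Y(1) by simp
  moreover have "I (insert y Y) \<longleftrightarrow> I Y" "I (insert x Y) \<longleftrightarrow> I Y"
    using indep_insert_coloop_iff Y(2) assms(1-4) by blast+
  ultimately show ?thesis
    using Y(1) by simp
next
  case False
  then have "transpose x y ` X = X"
    using assms(2,5) by (intro transpose_image_eq) auto
  then show ?thesis
    by simp
qed

end

lemma rank_of_matroid_iso:
  assumes "matroid_iso \<psi> E1 I1 E2 I2" "S \<subseteq> E1"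
  shows "rank_of I2 (\<psi> ` S) = rank_of I1 S"
proof -
  have inj: "inj_on \<psi> E1" and indep: "\<And>X. X \<subseteq> E1 \<Longrightarrow> I1 X \<longleftrightarrow> I2 (\<psi> ` X)"
    using assms(1) unfolding matroid_iso_def bij_betw_def by blast+
  have card_image_eq: "card (\<psi> ` X) = card X" if "X \<subseteq> S" for X
    using that assms(2) by (intro card_image inj_on_subset[OF inj]) auto
  have "{X. X \<subseteq> \<psi> ` S \<and> I2 X} = image \<psi> ` {X. X \<subseteq> S \<and> I1 X}"
  proof (intro equalityI subsetI)
    fix X assume X: "X \<in> {X. X \<subseteq> \<psi> ` S \<and> I2 X}"
    define Y where "Y = S \<inter> \<psi> -` X"
    have "X = \<psi> ` Y"
      using X unfolding Y_def by auto
    moreover have "Y \<in> {X. X \<subseteq> S \<and> I1 X}"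
      using X assms(2) indep[of Y] \<open>X = \<psi> ` Y\<close> unfolding Y_def by auto
    ultimately show "X \<in> image \<psi> ` {X. X \<subseteq> S \<and> I1 X}"
      by (rule image_eqI)
  next
    fix X assume "X \<in> image \<psi> ` {X. X \<subseteq> S \<and> I1 X}"
    then obtain Y where "X = \<psi> ` Y" "Y \<subseteq> S" "I1 Y"
      by blast
    with assms(2) indep[of Y] show "X \<in> {X. X \<subseteq> \<psi> ` S \<and> I2 X}"
      by auto
  qed
  then have "card ` {X. X \<subseteq> \<psi> ` S \<and> I2 X}
      = (\<lambda>X. card (\<psi> ` X)) ` {X. X \<subseteq> S \<and> I1 X}"
    by (simp add: image_image)
  also have "\<dots> = card ` {X. X \<subseteq> S \<and> I1 X}"
    by (rule image_cong) (auto simp: card_image_eq)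
  finally show ?thesis
    unfolding rank_of_def by simp
qed

context
  fixes M :: "graph \<Rightarrow> nat set set \<Rightarrow> bool"
  assumes family: "graph_matroid_family M"
begin

lemma family_matroid: "is_graph G \<Longrightarrow> matroid G (M G)"
  using family unfolding graph_matroid_family_def by blast

lemma family_graph_iso:
  "is_graph G \<Longrightarrow> is_graph H \<Longrightarrow> graph_iso \<phi> G H \<Longrightarrow>
    matroid_iso (edge_map \<phi>) G (M G) H (M H)"
  using family unfolding graph_matroid_family_def by blast

lemma family_restrict: "is_graph G \<Longrightarrow> H \<subseteq> G \<Longrightarrow> X \<subseteq> H \<Longrightarrow> M H X \<longleftrightarrow> M G X"
  using family unfolding graph_matroid_family_def by blast

lemma mrank_eq_rank_of:
  assumes "is_graph K" "G \<subseteq> K"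
  shows "mrank M G = rank_of (M K) G"
proof -
  have "is_graph G"
    using assms by (rule is_graph_subset)
  have "M G X \<longleftrightarrow> X \<subseteq> G \<and> M K X" for X
    using indep_subset_ground[OF family_matroid[OF \<open>is_graph G\<close>], of X]
      family_restrict[OF assms, of X] by blast
  then have "Collect (M G) = {X. X \<subseteq> G \<and> M K X}"
    by blast
  then show ?thesis
    unfolding mrank_def rank_of_def by simp
qed

lemma mrank_mono: "is_graph H \<Longrightarrow> G \<subseteq> H \<Longrightarrow> mrank M G \<le> mrank M H"
  using mrank_eq_rank_of[of H G] mrank_eq_rank_of[of H H] rank_of_mono[OF family_matroid[of H]]
  by simp

lemma exists_mrank_increasing_edge:
  assumes "is_graph H" "G \<subseteq> H" "mrank M G < mrank M H"
  shows "\<exists>y\<in>H - G. mrank M G < mrank M (insert y G)"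
proof -
  have "rank_of (M H) G < rank_of (M H) H"
    using assms mrank_eq_rank_of[of H] by simp
  then obtain y where "y \<in> H - G" "rank_of (M H) G < rank_of (M H) (insert y G)"
    using exists_rank_increasing_element[OF family_matroid[OF assms(1)] assms(2)] by blast
  moreover have "insert y G \<subseteq> H"
    using \<open>y \<in> H - G\<close> assms(2) by blast
  ultimately show ?thesis
    using assms(1,2) mrank_eq_rank_of by auto
qed

lemma matroid_iso_of_subgraphs:
  assumes "is_graph K" "H1 \<subseteq> K" "H2 \<subseteq> K" "bij_betw \<psi> H1 H2"
    and "\<And>X. X \<subseteq> H1 \<Longrightarrow> M K (\<psi> ` X) \<longleftrightarrow> M K X"
  shows "matroid_iso \<psi> H1 (M H1) H2 (M H2)"
  unfolding matroid_iso_def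
proof (intro conjI assms(4) allI impI)
  fix X assume "X \<subseteq> H1"
  then have "\<psi> ` X \<subseteq> H2"
    using assms(4) bij_betw_imp_surj_on by blast
  then have "M H2 (\<psi> ` X) \<longleftrightarrow> M K (\<psi> ` X)"
    using family_restrict[OF assms(1,3)] by blast
  moreover have "M H1 X \<longleftrightarrow> M K X"
    using family_restrict[OF assms(1,2)] \<open>X \<subseteq> H1\<close> by blast
  ultimately show "M H1 X \<longleftrightarrow> M H2 (\<psi> ` X)"
    using assms(5)[OF \<open>X \<subseteq> H1\<close>] by simp
qed

lemma rank_increasing_edge_unique:
  assumes "is_graph (insert x (insert y G))"
    and G: "k_connected 2 G" "x \<notin> G" "y \<notin> G" "x \<subseteq> verts G"
    and rank_x: "mrank M G < mrank M (insert x G)"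
    and rank_y: "mrank M G < mrank M (insert y G)"
    and recon: "M_reconstructible M (insert x G)"
  shows "x = y"
proof (rule ccontr)
  assume "x \<noteq> y"
  define K where "K = insert x (insert y G)"
  have K: "is_graph K" "G \<subseteq> K" "insert x G \<subseteq> K" "insert y G \<subseteq> K"
    using assms(1) unfolding K_def by auto
  then have "is_graph G" "is_graph (insert y G)"
    using is_graph_subset by blast+
  have "rank_of (M K) G < rank_of (M K) (insert x G)"
    "rank_of (M K) G < rank_of (M K) (insert y G)"
    using rank_x rank_y mrank_eq_rank_of[OF K(1)] K(2-4) by simp_all
  then have "M K (transpose x y ` X) \<longleftrightarrow> M K X" if "X \<subseteq> insert x G" for X
    using indep_transpose_added_coloops[OF family_matroid[OF K(1)] G(2,3)] that by blast
  moreover have "transpose x y ` insert x G = insert y G"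
    using G(2,3) by simp
  with inj_on_transpose have "bij_betw (transpose x y) (insert x G) (insert y G)"
    by (rule bij_betw_imageI)
  ultimately have
    "matroid_iso (transpose x y) (insert x G) (M (insert x G)) (insert y G) (M (insert y G))"
    using K by (intro matroid_iso_of_subgraphs) auto
  then obtain \<phi> where \<phi>: "\<And>e. e \<in> insert x G \<Longrightarrow> transpose x y e = edge_map \<phi> e"
    using recon \<open>is_graph (insert y G)\<close> unfolding M_reconstructible_def by blast
  have "\<phi> ` e = e" if "e \<in> G" for e
  proof -
    have "e \<noteq> x" "e \<noteq> y"
      using that G(2,3) by auto
    with \<phi>[of e] that show ?thesis
      unfolding edge_map_def by simp
  qed
  then have "\<phi> v = v" if "v \<in> verts G" for v
    using fixes_verts_if_fixes_edges[OF \<open>is_graph G\<close> G(1)] that by blast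
  then have "edge_map \<phi> x = id ` x"
    unfolding edge_map_def using G(4) by (intro image_cong) auto
  with \<phi>[of x] \<open>x \<noteq> y\<close> show False
    by simp
qed

lemma complete_graph_no_coloop:
  assumes V: "finite V" "3 < card V"
    and recon: "M_reconstructible M (complete_graph V)"
    and x: "x \<in> complete_graph V"
  shows "mrank M (complete_graph V - {x}) = mrank M (complete_graph V)"
proof (rule ccontr)
  define K where "K = complete_graph V"
  have K: "is_graph K" "verts K = V"
    using V unfolding K_def by (simp_all add: is_graph_complete_graph verts_complete_graph)
  assume "mrank M (complete_graph V - {x}) \<noteq> mrank M (complete_graph V)"
  moreover have "mrank M (K - {x}) \<le> mrank M K"
    using K(1) by (rule mrank_mono) auto
  ultimately have coloop_x: "rank_of (M K) (K - {x}) < rank_of (M K) K"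
    using mrank_eq_rank_of[OF K(1)] unfolding K_def by simp
  obtain a b where ab: "x = {a, b}" "a \<noteq> b"
    using K(1) x unfolding K_def by (rule is_graph_edge)
  have "a \<in> V" "b \<in> V"
    using x ab complete_graph_edge_subset by blast+
  have "card {a, b} < card V"
    using ab(2) V(2) by simp
  then obtain w where w: "w \<in> V" "w \<notin> {a, b}"
    using obtain_not_in_smaller_set[of "{a, b}" V] by auto
  have "card {a, b, w} < card V"
    using ab(2) w(2) V(2) by simp
  then obtain z where z: "z \<in> V" "z \<notin> {a, b, w}"
    using obtain_not_in_smaller_set[of "{a, b, w}" V] by auto
  define x' where "x' = {a, w}"
  have "x' \<in> K" "{b, z} \<in> K"
    unfolding x'_def K_def using \<open>a \<in> V\<close> \<open>b \<in> V\<close> w z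
    by (simp_all add: doubleton_in_complete_graph_iff)
  have "graph_iso (transpose b w) K K"
    unfolding K_def using V(2) \<open>b \<in> V\<close> w(1)
    by (intro graph_iso_complete_graph) simp_all
  then have iso_bw: "matroid_iso (edge_map (transpose b w)) K (M K) K (M K)"
    by (rule family_graph_iso[OF K(1) K(1)])
  have "edge_map (transpose b w) x = x'"
    unfolding edge_map_def ab x'_def using ab(2) w(2) by auto
  moreover have "inj_on (edge_map (transpose b w)) K" "edge_map (transpose b w) ` K = K"
    using iso_bw unfolding matroid_iso_def bij_betw_def by blast+
  ultimately have "edge_map (transpose b w) ` (K - {x}) = K - {x'}"
    using x unfolding K_def by (simp add: inj_on_image_set_diff)
  then have coloop_x': "rank_of (M K) (K - {x'}) < rank_of (M K) K"
    using rank_of_matroid_iso[OF iso_bw, of "K - {x}"] coloop_x by simp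
  have "M K (transpose x x' ` X) \<longleftrightarrow> M K X" if "X \<subseteq> K" for X
    using indep_transpose_coloops[OF family_matroid[OF K(1)] _ \<open>x' \<in> K\<close> coloop_x coloop_x' that] x
    unfolding K_def by blast
  moreover have "bij_betw (transpose x x') K K"
    using x \<open>x' \<in> K\<close> unfolding K_def by simp
  ultimately have "matroid_iso (transpose x x') K (M K) K (M K)"
    unfolding matroid_iso_def by simp
  then obtain \<phi> where \<phi>: "\<And>e. e \<in> K \<Longrightarrow> transpose x x' e = edge_map \<phi> e"
    using recon K(1) unfolding M_reconstructible_def K_def by blast
  have "{b, z} \<noteq> x" "{b, z} \<noteq> x'"
    using ab(2) w(2) z(2) unfolding ab x'_def by (auto simp: doubleton_eq_iff)
  have "\<phi> ` {b, z} = transpose x x' {b, z}"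
    using \<phi>[OF \<open>{b, z} \<in> K\<close>] unfolding edge_map_def by (rule sym)
  also have "\<dots> = {b, z}"
    using \<open>{b, z} \<noteq> x\<close> \<open>{b, z} \<noteq> x'\<close> by simp
  finally have "\<phi> b \<in> {b, z}"
    by blast
  have "x \<in> K"
    using x unfolding K_def .
  have "\<phi> ` x = transpose x x' x"
    using \<phi>[OF \<open>x \<in> K\<close>] unfolding edge_map_def by (rule sym)
  also have "\<dots> = x'"
    by simp
  finally have "\<phi> b \<in> {a, w}"
    unfolding ab(1) x'_def by blast
  with \<open>\<phi> b \<in> {b, z}\<close> show False
    using ab(2) w(2) z(2) by auto
qed

end

theorem lemma3p2:
  fixes M :: "graph \<Rightarrow> nat set set \<Rightarrow> bool"
  assumes "graph_matroid_family M"
    and "unbounded M"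
    and "whitney_property M"
  shows "lovasz_yemini_property M"
proof -
  obtain c where recon: "\<And>H. is_graph H \<Longrightarrow> k_connected c H \<Longrightarrow> M_reconstructible M H"
    using assms(3) unfolding whitney_property_def by blast
  have "M_rigid M G" if G: "is_graph G" "k_connected (max c 3) G" for G
  proof (rule ccontr)
    define K where "K = complete_graph (verts G)"
    have card_verts: "3 < card (verts G)"
      using G(2) unfolding k_connected_def by simp
    then have K: "is_graph K" "G \<subseteq> K" "verts K = verts G"
      unfolding K_def using G(1)
      by (simp_all add: finite_verts is_graph_complete_graph subset_complete_graph_verts
          verts_complete_graph)
    have spanning_recon: "M_reconstructible M H" if "G \<subseteq> H" "H \<subseteq> K" for H
    proof (rule recon)
      show "is_graph H"
        using K(1) that(2) by (rule is_graph_subset)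
      have "verts H = verts G"
        using verts_mono[OF that(1)] verts_mono[OF that(2)] K(3) by blast
      with G(2) that(1) show "k_connected c H"
        by (rule k_connected_mono) simp
    qed
    assume "\<not> M_rigid M G"
    then have "mrank M G < mrank M K"
      using mrank_mono[OF assms(1) K(1,2)] unfolding M_rigid_def K_def by simp
    then obtain x where x: "x \<in> K - G" "mrank M G < mrank M (insert x G)"
      using exists_mrank_increasing_edge[OF assms(1) K(1,2)] by blast
    have "mrank M (K - {x}) = mrank M K"
      using complete_graph_no_coloop[OF assms(1) finite_verts[OF G(1)] card_verts]
        spanning_recon[OF K(2) order_refl] x(1) unfolding K_def by blast
    with \<open>mrank M G < mrank M K\<close> obtain y
      where y: "y \<in> K - {x} - G" "mrank M G < mrank M (insert y G)"
      using exists_mrank_increasing_edge[OF assms(1) is_graph_subset[OF K(1)], of "K - {x}" G]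
        K(2) x(1) by auto
    have "x = y"
    proof (rule rank_increasing_edge_unique[OF assms(1)])
      show "is_graph (insert x (insert y G))"
        using K(1,2) x(1) y(1) by (auto intro: is_graph_subset)
      show "k_connected 2 G"
        using G(2) order_refl by (rule k_connected_mono) simp_all
      show "x \<subseteq> verts G"
        using x(1) complete_graph_edge_subset unfolding K_def by blast
      show "M_reconstructible M (insert x G)"
        using x(1) K(2) by (intro spanning_recon) auto
    qed (use x y in auto)
    with y(1) show False
      by blast
  qed
  then show ?thesis
    unfolding lovasz_yemini_property_def by blast
qed

end
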